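(* Let $\tau>2$ and $\xi\in\mathcal{D}(\tau)$, let $\beta=e^{2i\pi\xi}$, $\varphi(z)=\beta z$, and consider the operator $C_\varphi$ on $\mathrm{Hol}(\mathbb{D})$ given by $C_\varphi f=f\circ\varphi$. Then $$\{\beta^n:n\in\mathbb{N}_0\}\subset\sigma(C_\varphi)\subset\{e^{2i\pi x}:x\in\mathbb{R}\setminus\mathbb{Q}\}\cup\{1\}.$$
   Context: $\mathbb{D}$ is the open unit disc, $\mathrm{Hol}(\mathbb{D})$ the Fréchet space of holomorphic functions on $\mathbb{D}$ (topology of uniform convergence on compact sets), $\mathbb{N}_0=\mathbb{N}\cup\{0\}$. For a linear operator $S$ on $\mathrm{Hol}(\mathbb{D})$, $\sigma(S)$ is the set of $\lambda\in\mathbb{C}$ such that $\lambda\mathrm{Id}-S$ is not bijective. For $\tau>2$, $\mathcal{D}(\tau)$ is the set of $\xi\in\mathbb{R}$ for which there exists $\gamma>0$ with $|p/q-\xi|\geq\gamma q^{-\tau}$ for all $p\in\mathbb{Z}$, $q\in\mathbb{N}$ (diophantine numbers of order $\tau$). *)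

theory Defs
  imports "HOL-Analysis.Analysis"
begin

text \<open>Hol(D) is represented by functions holomorphic on the unit disc that are
normalised to be 0 outside the disc, so that function equality coincides with
equality on the disc.\<close>
definition hol_disc :: "(complex \<Rightarrow> complex) set" where
  "hol_disc = {f. f holomorphic_on ball 0 1 \<and> (\<forall>z. z \<notin> ball 0 1 \<longrightarrow> f z = 0)}"

definition hol_spectrum ::
  "((complex \<Rightarrow> complex) \<Rightarrow> (complex \<Rightarrow> complex)) \<Rightarrow> complex set" where
  "hol_spectrum S = {l. \<not> bij_betw (\<lambda>f z. l * f z - S f z) hol_disc hol_disc}"

definition diophantine :: "real \<Rightarrow> real \<Rightarrow> bool" where
  "diophantine \<tau> \<xi> \<longleftrightarrow>
     (\<exists>\<gamma>>0. \<forall>(p::int) (q::nat). q > 0 \<longrightarrow>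
        \<bar>real_of_int p / real q - \<xi>\<bar> \<ge> \<gamma> * real q powr (-\<tau>))"

end

theory Submission
  imports Defs "HOL-Complex_Analysis.Complex_Analysis" "HOL-Real_Asymp.Real_Asymp"
begin

text \<open>The operator \<open>\<lambda> Id - C\<^sub>\<phi>\<close> acts diagonally on Taylor coefficients at 0: the
\<open>n\<close>-th coefficient of \<open>\<lambda> f - f \<circ> \<phi>\<close> is \<open>(\<lambda> - \<beta>\<^sup>n) f\<^sub>n\<close>. Hence every \<open>\<beta>\<^sup>n\<close> is an
eigenvalue (eigenfunction \<open>z\<^sup>n\<close>), and \<open>\<lambda> Id - C\<^sub>\<phi>\<close> is bijective as soon as
\<open>|\<lambda> - \<beta>\<^sup>n|\<close> is bounded below by an inverse power of \<open>n\<close>: dividing the coefficients by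
such small divisors does not shrink the radius of convergence. Off the unit circle
\<open>||\<lambda>| - 1|\<close> is such a bound. For \<open>\<lambda> = exp (2\<pi>i p/q) \<noteq> 1\<close>, \<open>|\<lambda> - \<beta>\<^sup>n|\<close> is comparable to
the distance from \<open>p/q - n\<xi>\<close> to the integers, which the diophantine condition bounds
below by \<open>\<gamma> q^(-\<tau>) n^(1-\<tau>)\<close>.\<close>

lemma conv_radius_mono:
  fixes a b :: "nat \<Rightarrow> 'a :: {banach, real_normed_div_algebra}"
  assumes "\<And>n. norm (a n) \<le> norm (b n)"
  shows "conv_radius b \<le> conv_radius a"
proof -
  have "summable (\<lambda>n. a n * z ^ n)" if "norm z < conv_radius b" for z
  proof (rule summable_comparison_test)
    show "summable (\<lambda>n. norm (b n * z ^ n))"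
      using that by (rule abs_summable_in_conv_radius)
    show "\<exists>N. \<forall>n\<ge>N. norm (a n * z ^ n) \<le> norm (b n * z ^ n)"
      using assms by (intro exI allI impI) (simp add: norm_mult mult_right_mono)
  qed
  then show ?thesis
    by (intro conv_radius_geI_ex') simp
qed

lemma conv_radius_powr_weight:
  fixes f :: "nat \<Rightarrow> 'a :: {banach, real_normed_div_algebra}"
  shows "conv_radius (\<lambda>n. (1 + real n) powr M *\<^sub>R f n) = conv_radius f"
proof -
  have "(\<lambda>n. root n ((1 + real n) powr M)) \<longlonglongrightarrow> 1"
  proof (rule Lim_transform_eventually)
    show "(\<lambda>n. (1 + real n) powr (M / real n)) \<longlonglongrightarrow> 1" by real_asymp
    show "\<forall>\<^sub>F n in sequentially. (1 + real n) powr (M / real n) = root n ((1 + real n) powr M)"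
      using eventually_gt_at_top[of 0]
      by eventually_elim (simp add: root_powr_inverse powr_powr)
  qed
  then have lim: "(\<lambda>n. ereal (root n ((1 + real n) powr M))) \<longlonglongrightarrow> ereal 1"
    by (rule tendsto_ereal)
  have "limsup (\<lambda>n. ereal (root n (norm ((1 + real n) powr M *\<^sub>R f n))))
      = limsup (\<lambda>n. ereal (root n ((1 + real n) powr M)) * ereal (root n (norm (f n))))"
    by (simp add: real_root_mult)
  also have "\<dots> = ereal 1 * limsup (\<lambda>n. ereal (root n (norm (f n))))"
    using lim by (rule ereal_limsup_lim_mult) auto
  finally show ?thesis by (simp add: conv_radius_def)
qed

definition rotation_diff :: "complex \<Rightarrow> complex \<Rightarrow> (complex \<Rightarrow> complex) \<Rightarrow> complex \<Rightarrow> complex" where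
  "rotation_diff \<beta> l f z = l * f z - f (\<beta> * z)"

lemma hol_spectrum_rotation_iff:
  "l \<in> hol_spectrum (\<lambda>f. f \<circ> (\<lambda>z. \<beta> * z)) \<longleftrightarrow> \<not> bij_betw (rotation_diff \<beta> l) hol_disc hol_disc"
  by (simp add: hol_spectrum_def rotation_diff_def [abs_def])

lemma holomorphic_on_rotate:
  assumes "norm \<beta> = 1" and "f holomorphic_on ball 0 1"
  shows "(\<lambda>z. f (\<beta> * z)) holomorphic_on ball 0 1"
proof -
  have "(\<lambda>z. \<beta> * z) ` ball 0 1 \<subseteq> ball 0 1"
    using assms(1) by (auto simp: norm_mult)
  then show ?thesis
    using holomorphic_on_compose_gen[of "\<lambda>z. \<beta> * z" "ball 0 1" f "ball 0 1"] assms(2)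
    by (simp add: o_def holomorphic_intros)
qed

lemma rotation_diff_in_hol_disc:
  assumes "norm \<beta> = 1" and "f \<in> hol_disc"
  shows "rotation_diff \<beta> l f \<in> hol_disc"
  using assms holomorphic_on_rotate[OF assms(1)]
  by (auto simp: hol_disc_def rotation_diff_def [abs_def] norm_mult intro!: holomorphic_intros)

lemma higher_deriv_rotation_diff:
  assumes "norm \<beta> = 1" and f: "f holomorphic_on ball 0 1"
  shows "(deriv ^^ n) (rotation_diff \<beta> l f) 0 = (l - \<beta> ^ n) * (deriv ^^ n) f 0"
proof -
  have "(deriv ^^ n) (\<lambda>z. f (\<beta> * z)) 0 = \<beta> ^ n * (deriv ^^ n) f 0"
    using higher_deriv_compose_linear[OF f, where S = "ball 0 1" and u = \<beta> and z = 0] assms(1)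
    by (simp add: norm_mult)
  then show ?thesis
    unfolding rotation_diff_def [abs_def]
    by (subst higher_deriv_diff[where S = "ball 0 1"])
      (simp_all add: f holomorphic_on_rotate[OF assms] higher_deriv_cmult[OF f]
        holomorphic_intros left_diff_distrib)
qed

lemma hol_disc_eqI:
  assumes f: "f \<in> hol_disc" and g: "g \<in> hol_disc"
    and coeffs: "\<And>n. (deriv ^^ n) f 0 = (deriv ^^ n) g 0"
  shows "f = g"
proof
  fix z
  show "f z = g z"
  proof (cases "z \<in> ball 0 1")
    case True
    have "(\<lambda>n. (deriv ^^ n) f 0 / fact n * (z - 0) ^ n) sums f z"
         "(\<lambda>n. (deriv ^^ n) g 0 / fact n * (z - 0) ^ n) sums g z"
      using f g True unfolding hol_disc_def by (blast intro: holomorphic_power_series)+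
    then show ?thesis
      by (simp add: coeffs sums_unique2)
  next
    case False
    then show ?thesis using f g by (simp add: hol_disc_def)
  qed
qed

lemma inj_on_rotation_diff:
  assumes "norm \<beta> = 1" and "\<And>n. l \<noteq> \<beta> ^ n"
  shows "inj_on (rotation_diff \<beta> l) hol_disc"
proof (rule inj_onI)
  fix f g assume f: "f \<in> hol_disc" and g: "g \<in> hol_disc"
    and eq: "rotation_diff \<beta> l f = rotation_diff \<beta> l g"
  show "f = g"
  proof (rule hol_disc_eqI[OF f g])
    fix n
    have "(l - \<beta> ^ n) * (deriv ^^ n) f 0 = (l - \<beta> ^ n) * (deriv ^^ n) g 0"
      using f g eq by (simp add: hol_disc_def flip: higher_deriv_rotation_diff[OF assms(1)])
    then show "(deriv ^^ n) f 0 = (deriv ^^ n) g 0"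
      using assms(2)[of n] by simp
  qed
qed

lemma conv_radius_taylor_coeffs_ge_1:
  assumes "f holomorphic_on ball 0 1"
  shows "1 \<le> conv_radius (\<lambda>n. (deriv ^^ n) f 0 / fact n)"
proof (rule conv_radius_geI_ex')
  fix r :: real assume "0 < r" "ereal r < 1"
  then have "complex_of_real r \<in> ball 0 1" by simp
  from holomorphic_power_series[OF assms this]
  show "summable (\<lambda>n. (deriv ^^ n) f 0 / fact n * complex_of_real r ^ n)"
    by (simp add: sums_summable)
qed

lemma obtain_hol_disc_with_taylor_coeffs:
  assumes "1 \<le> conv_radius a"
  obtains F where "F \<in> hol_disc" and "\<And>n. (deriv ^^ n) F 0 = fact n * a n"
proof
  define A where "A = Abs_fps a"
  define F where "F z = (if z \<in> ball 0 1 then eval_fps A z else 0)" for z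
  have ball: "ball 0 1 \<subseteq> eball 0 (fps_conv_radius A)"
    by (auto simp: A_def fps_conv_radius_def intro!: order.strict_trans2[OF _ assms])
  have "F holomorphic_on ball 0 1"
    using holomorphic_on_eval_fps[OF ball] by (rule holomorphic_transform) (simp add: F_def)
  then show "F \<in> hol_disc"
    by (simp add: hol_disc_def F_def)
  fix n
  have "\<forall>\<^sub>F z in nhds 0. z \<in> ball 0 1"
    by (intro eventually_nhds_in_open) auto
  then have "\<forall>\<^sub>F z in nhds 0. F z = eval_fps A z"
    by eventually_elim (simp add: F_def)
  then have "(deriv ^^ n) F 0 = (deriv ^^ n) (eval_fps A) 0"
    by (rule higher_deriv_cong_ev) simp
  also have "\<dots> = fact n * a n"
  proof -
    have "0 < conv_radius a"
      using assms by (cases "conv_radius a") auto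
    then show ?thesis
      using fps_nth_conv_deriv[of A n] by (simp add: A_def fps_conv_radius_def)
  qed
  finally show "(deriv ^^ n) F 0 = fact n * a n" .
qed

lemma hol_disc_subset_image_rotation_diff:
  assumes \<beta>: "norm \<beta> = 1" and "c > 0"
    and bound: "\<And>n. c \<le> norm (l - \<beta> ^ n) * (1 + real n) powr M"
  shows "hol_disc \<subseteq> rotation_diff \<beta> l ` hol_disc"
proof
  fix g assume g: "g \<in> hol_disc"
  then have hol_g: "g holomorphic_on ball 0 1" by (simp add: hol_disc_def)
  define b where "b n = (deriv ^^ n) g 0 / fact n" for n
  define a where "a n = b n / (l - \<beta> ^ n)" for n
  have nonzero: "l - \<beta> ^ n \<noteq> 0" for n
    using bound[of n] \<open>c > 0\<close> by auto
  have "norm (a n) \<le> norm ((1 + real n) powr M *\<^sub>R (b n / of_real c))" for n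
  proof -
    have weight: "c / norm (l - \<beta> ^ n) \<le> (1 + real n) powr M"
      using bound[of n] nonzero[of n] by (simp add: divide_le_eq mult.commute)
    have "norm (a n) = c / norm (l - \<beta> ^ n) * norm (b n) / c"
      using \<open>c > 0\<close> by (simp add: a_def norm_divide)
    also have "\<dots> \<le> (1 + real n) powr M * norm (b n) / c"
      using \<open>c > 0\<close> weight by (intro divide_right_mono mult_right_mono) auto
    also have "\<dots> = norm ((1 + real n) powr M *\<^sub>R (b n / of_real c))"
      using \<open>c > 0\<close> by (simp add: norm_divide)
    finally show ?thesis .
  qed
  then have "conv_radius (\<lambda>n. (1 + real n) powr M *\<^sub>R (b n / of_real c)) \<le> conv_radius a"
    by (rule conv_radius_mono)
  moreover have "conv_radius (\<lambda>n. (1 + real n) powr M *\<^sub>R (b n / of_real c)) = conv_radius b"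
    using \<open>c > 0\<close> conv_radius_cmult_right[of "inverse (of_real c)" b]
    by (simp add: conv_radius_powr_weight divide_inverse)
  moreover have "1 \<le> conv_radius b"
    unfolding b_def using hol_g by (rule conv_radius_taylor_coeffs_ge_1)
  ultimately have "1 \<le> conv_radius a"
    by simp
  then obtain F where F: "F \<in> hol_disc" and coeffs_F: "\<And>n. (deriv ^^ n) F 0 = fact n * a n"
    using obtain_hol_disc_with_taylor_coeffs by blast
  have "rotation_diff \<beta> l F = g"
  proof (rule hol_disc_eqI[OF rotation_diff_in_hol_disc[OF \<beta> F] g])
    fix n
    have "(deriv ^^ n) (rotation_diff \<beta> l F) 0 = (l - \<beta> ^ n) * (deriv ^^ n) F 0"
      using F by (intro higher_deriv_rotation_diff[OF \<beta>]) (simp add: hol_disc_def)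
    also have "\<dots> = (l - \<beta> ^ n) * a n * fact n"
      by (simp only: coeffs_F ac_simps)
    also have "\<dots> = (deriv ^^ n) g 0"
      using nonzero[of n] by (simp add: a_def b_def)
    finally show "(deriv ^^ n) (rotation_diff \<beta> l F) 0 = (deriv ^^ n) g 0" .
  qed
  then show "g \<in> rotation_diff \<beta> l ` hol_disc"
    using F by blast
qed

lemma not_in_hol_spectrum_rotationI:
  assumes \<beta>: "norm \<beta> = 1" and "c > 0"
    and bound: "\<And>n. c \<le> norm (l - \<beta> ^ n) * (1 + real n) powr M"
  shows "l \<notin> hol_spectrum (\<lambda>f. f \<circ> (\<lambda>z. \<beta> * z))"
proof -
  have "l \<noteq> \<beta> ^ n" for n
    using bound[of n] \<open>c > 0\<close> by auto
  then have "inj_on (rotation_diff \<beta> l) hol_disc"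
    by (rule inj_on_rotation_diff[OF \<beta>])
  moreover have "rotation_diff \<beta> l ` hol_disc = hol_disc"
    using hol_disc_subset_image_rotation_diff[OF assms] rotation_diff_in_hol_disc[OF \<beta>] by blast
  ultimately show ?thesis
    by (simp add: hol_spectrum_rotation_iff bij_betw_def)
qed

lemma power_in_hol_spectrum_rotation:
  assumes "norm \<beta> = 1"
  shows "\<beta> ^ n \<in> hol_spectrum (\<lambda>f. f \<circ> (\<lambda>z. \<beta> * z))"
proof -
  define m where "m z = (if z \<in> ball 0 1 then z ^ n else 0)" for z :: complex
  have "m holomorphic_on ball 0 1"
    by (rule holomorphic_transform[of "\<lambda>z. z ^ n"]) (auto simp: m_def holomorphic_intros)
  then have "m \<in> hol_disc"
    by (simp add: hol_disc_def m_def)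
  moreover have "(\<lambda>_. 0) \<in> hol_disc"
    by (simp add: hol_disc_def)
  moreover have "rotation_diff \<beta> (\<beta> ^ n) m = rotation_diff \<beta> (\<beta> ^ n) (\<lambda>_. 0)"
    using assms by (auto simp: rotation_diff_def m_def norm_mult power_mult_distrib)
  moreover have "m \<noteq> (\<lambda>_. 0)"
    by (auto simp: m_def fun_eq_iff intro!: exI[of _ "1/2"])
  ultimately have "\<not> inj_on (rotation_diff \<beta> (\<beta> ^ n)) hol_disc"
    by (meson inj_onD)
  then show ?thesis
    by (simp add: hol_spectrum_rotation_iff bij_betw_def)
qed

definition e2pi :: "real \<Rightarrow> complex" where
  "e2pi x = exp (2 * complex_of_real pi * \<i> * complex_of_real x)"

lemma norm_e2pi [simp]: "norm (e2pi x) = 1"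
  by (simp add: e2pi_def)

lemma e2pi_nonzero [simp]: "e2pi x \<noteq> 0"
  by (simp add: e2pi_def)

lemma e2pi_diff: "e2pi (x - y) = e2pi x / e2pi y"
  by (simp add: e2pi_def right_diff_distrib exp_diff)

lemma e2pi_of_int [simp]: "e2pi (of_int k) = 1"
  using exp_integer_2pi[of "of_int k"] by (simp add: e2pi_def mult_ac)

lemma e2pi_power: "e2pi x ^ n = e2pi (real n * x)"
  by (simp add: e2pi_def mult_ac flip: exp_of_nat_mult)

lemma e2pi_Arg:
  assumes "norm l = 1"
  shows "l = e2pi (Arg l / (2 * pi))"
proof -
  have "l \<noteq> 0"
    using assms by auto
  then show ?thesis
    using Arg_eq[of l] assms by (simp add: e2pi_def mult_ac)
qed

lemma norm_e2pi_diff: "norm (e2pi x - e2pi y) = norm (e2pi (x - y) - 1)"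
proof -
  have "e2pi x - e2pi y = e2pi y * (e2pi (x - y) - 1)"
    by (simp add: e2pi_diff right_diff_distrib)
  then show ?thesis
    by (simp add: norm_mult)
qed

lemma norm_e2pi_sub_one_lower_bound_near_0:
  obtains c where "c > 0" and "\<And>s. \<bar>s\<bar> \<le> 1/2 \<Longrightarrow> c * \<bar>s\<bar> \<le> norm (e2pi s - 1)"
proof
  define c1 where "c1 = 1 - cos (1/2::real)"
  have "cos (1/2::real) < cos 0"
    by (rule cos_monotone_0_pi) (use pi_gt3 in auto)
  then have c1: "c1 > 0" by (simp add: c1_def)
  then show "0 < min 1 (2 * c1)" by simp
  fix s :: real assume s: "\<bar>s\<bar> \<le> 1/2"
  define z where "z = 2 * complex_of_real pi * \<i> * complex_of_real s"
  have norm_z: "norm z = 2 * pi * \<bar>s\<bar>" by (simp add: z_def norm_mult)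
  show "min 1 (2 * c1) * \<bar>s\<bar> \<le> norm (e2pi s - 1)"
  proof (cases "norm z \<le> 1/2")
    case True
    have "min 1 (2 * c1) * \<bar>s\<bar> \<le> \<bar>s\<bar>"
      using c1 by (intro mult_left_le_one_le) auto
    also have "\<dots> \<le> 1/2 * norm z"
      using norm_z pi_gt3 by (simp add: mult_right_mono[of 1 pi "\<bar>s\<bar>", simplified])
    also have "\<dots> \<le> norm (exp z - 1)"
      using norm_exp_bounds(1)[OF True] by simp
    finally show ?thesis by (simp add: e2pi_def z_def)
  next
    case False
    define t where "t = 2 * pi * s"
    have t: "1/2 < \<bar>t\<bar>" "\<bar>t\<bar> \<le> pi"
      using False norm_z s pi_gt3 by (auto simp: t_def abs_mult)
    have "min 1 (2 * c1) * \<bar>s\<bar> \<le> 2 * c1 * (1/2)"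
      using s c1 by (intro mult_mono) auto
    also have "\<dots> \<le> 1 - cos \<bar>t\<bar>"
      using cos_monotone_0_pi_le[of "1/2" "\<bar>t\<bar>"] t by (simp add: c1_def)
    also have "\<dots> = \<bar>Re (exp z - 1)\<bar>"
      using cos_le_one[of t] by (simp add: z_def t_def Re_exp)
    also have "\<dots> \<le> norm (exp z - 1)"
      by (rule abs_Re_le_cmod)
    finally show ?thesis by (simp add: e2pi_def z_def)
  qed
qed

lemma norm_e2pi_sub_one_lower_bound:
  obtains c where "c > 0" and "\<And>x. c * \<bar>x - of_int (round x)\<bar> \<le> norm (e2pi x - 1)"
proof -
  obtain c where c: "c > 0" "\<And>s. \<bar>s\<bar> \<le> 1/2 \<Longrightarrow> c * \<bar>s\<bar> \<le> norm (e2pi s - 1)"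
    using norm_e2pi_sub_one_lower_bound_near_0 by blast
  have "c * \<bar>x - of_int (round x)\<bar> \<le> norm (e2pi x - 1)" for x
  proof -
    have "\<bar>x - of_int (round x)\<bar> \<le> 1/2"
      using of_int_round_ge[of x] of_int_round_le[of x] by linarith
    moreover have "e2pi (x - of_int (round x)) = e2pi x"
      by (simp add: e2pi_diff)
    ultimately show ?thesis
      using c(2) by metis
  qed
  with c(1) show ?thesis using that by blast
qed

lemma diophantine_small_divisors:
  assumes "diophantine \<tau> \<xi>" and "1 \<le> \<tau>" and "x \<in> \<rat>"
  obtains c where "c > 0"
    and "\<And>n. 0 < n \<Longrightarrow> c \<le> norm (e2pi x - e2pi \<xi> ^ n) * (1 + real n) powr (\<tau> - 1)"
proof -
  obtain p :: int and q :: nat where q: "q > 0" and x: "x = of_int p / real q"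
    using \<open>x \<in> \<rat>\<close> by (metis Rats_cases' of_int_of_nat_eq zero_less_imp_eq_int of_int_pos)
  obtain \<gamma> where \<gamma>: "\<gamma> > 0"
    and approx: "\<And>P (Q::nat). Q > 0 \<Longrightarrow> \<gamma> * real Q powr (-\<tau>) \<le> \<bar>of_int P / real Q - \<xi>\<bar>"
    using \<open>diophantine \<tau> \<xi>\<close> by (auto simp: diophantine_def)
  obtain c0 where c0: "c0 > 0" "\<And>y. c0 * \<bar>y - of_int (round y)\<bar> \<le> norm (e2pi y - 1)"
    using norm_e2pi_sub_one_lower_bound by blast
  have "c0 * \<gamma> * real q powr (-\<tau>) \<le> norm (e2pi x - e2pi \<xi> ^ n) * (1 + real n) powr (\<tau> - 1)"
    if n: "n > 0" for n
  proof -
    define y where "y = x - real n * \<xi>"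
    define k where "k = round y"
    have "y - of_int k = real n * (of_int (p - int q * k) / real (q * n) - \<xi>)"
      using q n by (simp add: y_def x field_simps)
    then have "real n * (\<gamma> * real (q * n) powr (-\<tau>)) \<le> \<bar>y - of_int k\<bar>"
      using q n approx[of "q * n" "p - int q * k"] by (simp add: abs_mult)
    also have "real n * (\<gamma> * real (q * n) powr (-\<tau>)) = \<gamma> * real q powr (-\<tau>) * real n powr (1 - \<tau>)"
      using q n by (simp add: powr_mult powr_diff powr_minus field_simps)
    finally have dist_int: "\<gamma> * real q powr (-\<tau>) * real n powr (1 - \<tau>) \<le> \<bar>y - of_int k\<bar>" .
    have "1 = real n powr (1 - \<tau>) * real n powr (\<tau> - 1)"
      using n by (simp flip: powr_add)
    also have "\<dots> \<le> real n powr (1 - \<tau>) * (1 + real n) powr (\<tau> - 1)"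
      using n \<open>1 \<le> \<tau>\<close> by (intro mult_left_mono powr_mono2) auto
    finally have growth: "1 \<le> real n powr (1 - \<tau>) * (1 + real n) powr (\<tau> - 1)" .
    have "c0 * \<gamma> * real q powr (-\<tau>)
        \<le> c0 * (\<gamma> * real q powr (-\<tau>) * real n powr (1 - \<tau>)) * (1 + real n) powr (\<tau> - 1)"
      using mult_left_mono[OF growth, of "c0 * \<gamma> * real q powr (-\<tau>)"] c0(1) \<gamma>
      by (simp add: mult_ac)
    also have "\<dots> \<le> c0 * \<bar>y - of_int k\<bar> * (1 + real n) powr (\<tau> - 1)"
      using dist_int c0(1) by (intro mult_right_mono mult_left_mono) auto
    also have "\<dots> \<le> norm (e2pi y - 1) * (1 + real n) powr (\<tau> - 1)"
      using c0(2)[of y] by (intro mult_right_mono) (auto simp: k_def)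
    also have "norm (e2pi y - 1) = norm (e2pi x - e2pi \<xi> ^ n)"
      by (simp add: y_def e2pi_power norm_e2pi_diff)
    finally show ?thesis .
  qed
  moreover have "c0 * \<gamma> * real q powr (-\<tau>) > 0"
    using c0(1) \<gamma> q by simp
  ultimately show ?thesis
    using that by blast
qed

lemma off_circle_not_in_hol_spectrum_rotation:
  assumes "norm \<beta> = 1" and "norm l \<noteq> 1"
  shows "l \<notin> hol_spectrum (\<lambda>f. f \<circ> (\<lambda>z. \<beta> * z))"
proof (rule not_in_hol_spectrum_rotationI[OF assms(1), where M = 0])
  show "0 < \<bar>norm l - 1\<bar>"
    using assms(2) by simp
  fix n
  have "\<bar>norm l - 1\<bar> \<le> norm (l - \<beta> ^ n)"
    using norm_triangle_ineq3[of l "\<beta> ^ n"] assms(1) by (simp add: norm_power)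
  then show "\<bar>norm l - 1\<bar> \<le> norm (l - \<beta> ^ n) * (1 + real n) powr 0"
    by simp
qed

lemma rational_rotation_not_in_hol_spectrum:
  assumes "diophantine \<tau> \<xi>" and "1 \<le> \<tau>" and "x \<in> \<rat>" and "e2pi x \<noteq> 1"
  shows "e2pi x \<notin> hol_spectrum (\<lambda>f. f \<circ> (\<lambda>z. e2pi \<xi> * z))"
proof -
  obtain c where c: "c > 0"
    and bound: "\<And>n. 0 < n \<Longrightarrow> c \<le> norm (e2pi x - e2pi \<xi> ^ n) * (1 + real n) powr (\<tau> - 1)"
    using diophantine_small_divisors[OF assms(1-3)] by blast
  show ?thesis
  proof (rule not_in_hol_spectrum_rotationI[where c = "min c (norm (e2pi x - 1))" and M = "\<tau> - 1"])
    show "norm (e2pi \<xi>) = 1" and "0 < min c (norm (e2pi x - 1))"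
      using c assms(4) by simp_all
    fix n
    show "min c (norm (e2pi x - 1)) \<le> norm (e2pi x - e2pi \<xi> ^ n) * (1 + real n) powr (\<tau> - 1)"
      using bound[of n] by (cases "n = 0") (auto intro: min.coboundedI1)
  qed
qed

theorem theorem4p2:
  fixes \<tau> \<xi> :: real and \<beta> :: complex
  assumes "\<tau> > 2" and "diophantine \<tau> \<xi>"
    and "\<beta> = exp (2 * complex_of_real pi * \<i> * complex_of_real \<xi>)"
  shows "{\<beta> ^ n | n::nat. True} \<subseteq> hol_spectrum (\<lambda>f. f \<circ> (\<lambda>z. \<beta> * z))
       \<and> hol_spectrum (\<lambda>f. f \<circ> (\<lambda>z. \<beta> * z))
           \<subseteq> {exp (2 * complex_of_real pi * \<i> * complex_of_real x) | x::real. x \<notin> \<rat>} \<union> {1}"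
proof
  have \<beta>: "\<beta> = e2pi \<xi>"
    using assms(3) by (simp add: e2pi_def)
  then show "{\<beta> ^ n | n. True} \<subseteq> hol_spectrum (\<lambda>f. f \<circ> (\<lambda>z. \<beta> * z))"
    using power_in_hol_spectrum_rotation[of \<beta>] by auto
  show "hol_spectrum (\<lambda>f. f \<circ> (\<lambda>z. \<beta> * z))
      \<subseteq> {exp (2 * complex_of_real pi * \<i> * complex_of_real x) | x. x \<notin> \<rat>} \<union> {1}"
  proof
    fix l assume l: "l \<in> hol_spectrum (\<lambda>f. f \<circ> (\<lambda>z. \<beta> * z))"
    then have "norm l = 1"
      using off_circle_not_in_hol_spectrum_rotation[of \<beta> l] \<beta> by auto
    then obtain x where x: "l = e2pi x"
      using e2pi_Arg by blast
    have "x \<notin> \<rat>" if "l \<noteq> 1"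
      using rational_rotation_not_in_hol_spectrum[OF assms(2), of x] assms(1) l that x \<beta> by auto
    then show "l \<in> {exp (2 * complex_of_real pi * \<i> * complex_of_real x) | x. x \<notin> \<rat>} \<union> {1}"
      using x by (auto simp: e2pi_def)
  qed
qed

end
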